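(* For every $x\in\Sigma$ and $a,b\in\Sigma\setminus\{x\}$, $K_{x,a,b}\subseteq\Sigma^*\setminus L_{\mathrm{UNIQ}}$; that is, no string in $K_{x,a,b}$ is uniquely decodable from its bigram counts.
   Context: Let $\Sigma$ be a finite alphabet and $\$\notin\Sigma$ a delimiter symbol; $\Sigma_\$=\Sigma\cup\{\$\}$. The bigram map $\Phi$ sends a string $z\in\$\Sigma^*\$$ to the vector $\Phi(z)\in\mathbb{N}^{\Sigma_\$^2}$ whose $(i,j)$ entry is the number of positions at which the two-letter string $ij$ occurs as a contiguous factor of $z$ (counting overlaps). $L_{\mathrm{UNIQ}}$ is the set of $w\in\Sigma^*$ such that the only $z\in\$\Sigma^*\$$ with $\Phi(z)=\Phi(\$w\$)$ is $z=\$w\$$. For $x\in\Sigma$ write $\Sigma_{\neg x}=\Sigma\setminus\{x\}$. For $x\in\Sigma$ and $a,b\in\Sigma_{\neg x}$ (with $a=b$ allowed) define $I_{x,a,b}=\Sigma^*\,a\,x\,\Sigma_{\neg a}^*\,b\,\Sigma^*$, $J_{x,a,b}=\Sigma^*\,a\,\Sigma_{\neg x}^*\,b\,\Sigma^*$ (regular-expression notation), and $K_{x,a,b}=I_{x,a,b}\cap J_{x,a,b}$. *)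

theory Defs
  imports Main
begin

text \<open>The delimiter symbol is represented by None; letters of the alphabet by Some.
  A string over the extended alphabet is a list of type 'a option list.\<close>

definition delim :: "'a list \<Rightarrow> 'a option list" where
  "delim w = [None] @ map Some w @ [None]"

definition bigram :: "'b list \<Rightarrow> ('b \<times> 'b \<Rightarrow> nat)" where
  "bigram z = (\<lambda>(i, j). card {k. Suc k < length z \<and> z ! k = i \<and> z ! Suc k = j})"

definition L_UNIQ :: "'a set \<Rightarrow> 'a list set" where
  "L_UNIQ Sig = {w. set w \<subseteq> Sig \<and>
     (\<forall>u. set u \<subseteq> Sig \<longrightarrow> bigram (delim u) = bigram (delim w) \<longrightarrow> u = w)}"

definition I_lang :: "'a set \<Rightarrow> 'a \<Rightarrow> 'a \<Rightarrow> 'a \<Rightarrow> 'a list set" where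
  "I_lang Sig x a b = {p @ [a, x] @ v @ [b] @ s | p v s.
     set p \<subseteq> Sig \<and> set v \<subseteq> Sig - {a} \<and> set s \<subseteq> Sig}"

definition J_lang :: "'a set \<Rightarrow> 'a \<Rightarrow> 'a \<Rightarrow> 'a \<Rightarrow> 'a list set" where
  "J_lang Sig x a b = {p @ [a] @ v @ [b] @ s | p v s.
     set p \<subseteq> Sig \<and> set v \<subseteq> Sig - {x} \<and> set s \<subseteq> Sig}"

definition K_lang :: "'a set \<Rightarrow> 'a \<Rightarrow> 'a \<Rightarrow> 'a \<Rightarrow> 'a list set" where
  "K_lang Sig x a b = I_lang Sig x a b \<inter> J_lang Sig x a b"

end

theory Submission
  imports Defs "HOL-Library.Multiset"
begin

(* The bigram vector of a string only depends on the multiset of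
   its adjacent pairs.  Cutting a string at a letter c splits this multiset into
   the pairs of the two pieces, so two segments c..d and c..d of a string (with the
   same end letters) can be exchanged without changing any bigram count; the same
   holds for two consecutive "returns" c..c..c.
   A word w in K_{x,a,b} contains a factor a x v b with v free of a, and a factor
   a v' b with v' free of x.  These are different occurrences, and comparing their
   positions shows they are either disjoint or (if a = b) share one end letter.
   Exchanging the two segments yields a different word (one segment starts with x,
   the other does not) over the same letters with the same bigram vector after
   delimiting, so w is not uniquely decodable. *)

fun adj_pairs :: "'b list \<Rightarrow> ('b \<times> 'b) list" where
  "adj_pairs (c # d # r) = (c, d) # adj_pairs (d # r)"
| "adj_pairs _ = []"

lemma adj_pairs_zip: "adj_pairs z = zip z (tl z)"
  by (induction z rule: adj_pairs.induct) auto

lemma adj_pairs_split: "adj_pairs (xs @ c # ys) = adj_pairs (xs @ [c]) @ adj_pairs (c # ys)"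
proof (induction xs)
  case (Cons d xs)
  then show ?case by (cases xs) auto
qed simp

lemma bigram_eq_count_adj_pairs: "bigram z = count (mset (adj_pairs z))"
proof
  fix q :: "'a \<times> 'a"
  obtain i j where q: "q = (i, j)" by force
  have "count (mset (adj_pairs z)) q = length (filter ((=) q) (zip z (tl z)))"
    by (simp add: adj_pairs_zip count_mset count_list_eq_length_filter)
  also have "\<dots> = card {k. k < length (zip z (tl z)) \<and> q = zip z (tl z) ! k}"
    by (simp add: length_filter_conv_card)
  also have "\<dots> = card {k. Suc k < length z \<and> z ! k = i \<and> z ! Suc k = j}"
    by (rule arg_cong[where f = card]) (auto simp: q nth_tl)
  finally show "bigram z q = count (mset (adj_pairs z)) q"
    by (simp add: bigram_def q)
qed

lemma mset_adj_pairs_split: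
  "R \<noteq> [] \<Longrightarrow> mset (adj_pairs (A @ c # R)) = mset (adj_pairs (A @ [c])) + mset (adj_pairs (c # R))"
  by (simp add: adj_pairs_split[of A c R])

text \<open>The same rule in the normal form the simplifier gives to a cut after a segment c B d.\<close>
lemma mset_adj_pairs_split_segment:
  "R \<noteq> [] \<Longrightarrow> mset (adj_pairs (c # B @ d # R)) = mset (adj_pairs (c # B @ [d])) + mset (adj_pairs (d # R))"
  using adj_pairs_split[of "c # B" d R] by simp

lemma bigram_swap_segments:
  "bigram (A @ c # B @ d # C @ c # D @ d # E) = bigram (A @ c # D @ d # C @ c # B @ d # E)"
proof -
  have "mset (adj_pairs (A @ c # B @ d # C @ c # D @ d # E))
      = mset (adj_pairs (A @ c # D @ d # C @ c # B @ d # E))"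
    using adj_pairs_split[of "c # B" d E] adj_pairs_split[of "c # D" d E]
    by (simp add: mset_adj_pairs_split mset_adj_pairs_split_segment del: append_Cons)
      (simp add: ac_simps)
  then show ?thesis by (simp add: bigram_eq_count_adj_pairs)
qed

lemma bigram_swap_returns:
  "bigram (A @ c # B @ c # D @ c # E) = bigram (A @ c # D @ c # B @ c # E)"
proof -
  have "mset (adj_pairs (A @ c # B @ c # D @ c # E)) = mset (adj_pairs (A @ c # D @ c # B @ c # E))"
    using adj_pairs_split[of "c # B" c E] adj_pairs_split[of "c # D" c E]
    by (simp add: mset_adj_pairs_split mset_adj_pairs_split_segment del: append_Cons)
      (simp add: ac_simps)
  then show ?thesis by (simp add: bigram_eq_count_adj_pairs)
qed

definition bigram_ambiguous :: "'a list \<Rightarrow> bool" where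
  "bigram_ambiguous w \<longleftrightarrow> (\<exists>u. set u = set w \<and> u \<noteq> w \<and> bigram (delim u) = bigram (delim w))"

lemma bigram_ambiguous_not_UNIQ:
  "bigram_ambiguous w \<Longrightarrow> set w \<subseteq> Sig \<Longrightarrow> w \<notin> L_UNIQ Sig"
  unfolding bigram_ambiguous_def L_UNIQ_def by auto

lemma ambiguous_swap_segments:
  assumes "hd (B @ [d]) \<noteq> hd (D @ [d])"
  shows "bigram_ambiguous (A @ c # B @ d # C @ c # D @ d # E)"
  unfolding bigram_ambiguous_def
proof (intro exI conjI)
  let ?u = "A @ c # D @ d # C @ c # B @ d # E"
  show "set ?u = set (A @ c # B @ d # C @ c # D @ d # E)" by auto
  show "?u \<noteq> A @ c # B @ d # C @ c # D @ d # E"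
    using assms by (cases B; cases D) auto
  show "bigram (delim ?u) = bigram (delim (A @ c # B @ d # C @ c # D @ d # E))"
    using bigram_swap_segments[of "None # map Some A" "Some c" "map Some D" "Some d"
        "map Some C" "map Some B" "map Some E @ [None]"]
    by (simp add: delim_def)
qed

lemma ambiguous_swap_returns:
  assumes "hd (B @ [c]) \<noteq> hd (D @ [c])"
  shows "bigram_ambiguous (A @ c # B @ c # D @ c # E)"
  unfolding bigram_ambiguous_def
proof (intro exI conjI)
  let ?u = "A @ c # D @ c # B @ c # E"
  show "set ?u = set (A @ c # B @ c # D @ c # E)" by auto
  show "?u \<noteq> A @ c # B @ c # D @ c # E"
    using assms by (cases B; cases D) auto
  show "bigram (delim ?u) = bigram (delim (A @ c # B @ c # D @ c # E))"
    using bigram_swap_returns[of "None # map Some A" "Some c" "map Some D" "map Some B"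
        "map Some E @ [None]"]
    by (simp add: delim_def)
qed

lemma two_occurrences:
  assumes "p @ c # r = p' @ c # r'" and "length p < length p'"
  obtains m where "p' = p @ c # m" and "r = m @ c # r'"
  using assms by (auto simp: append_eq_append_conv2 Cons_eq_append_conv)

lemma prefix_before_letter:
  assumes "u @ s = m @ y # r" and "y \<notin> set u"
  obtains t where "m = u @ t"
proof -
  from assms(1) obtain t where "m = u @ t \<or> (u = m @ t \<and> t @ s = y # r)"
    by (auto simp: append_eq_append_conv2)
  moreover have "t = []" if "u = m @ t" "t @ s = y # r"
    using that \<open>y \<notin> set u\<close> by (cases t) auto
  ultimately show ?thesis using that by auto
qed

lemma factor_positions:
  assumes w1: "w = p @ a # x # v @ b # s" and w2: "w = p' @ a # v' @ b # s'"
    and "a \<noteq> x" "b \<noteq> x" "a \<notin> set v" "x \<notin> set v'"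
  obtains (disjoint_before) t where "w = p' @ a # v' @ b # t @ a # (x # v) @ b # s"
  | (shared_before) "a = b" "w = p' @ a # v' @ a # (x # v) @ a # s"
  | (disjoint_after) t where "w = p @ a # (x # v) @ b # t @ a # v' @ b # s'"
  | (shared_after) "a = b" "w = p @ a # (x # v) @ a # v' @ a # s'"
proof -
  have eq: "p @ a # x # v @ b # s = p' @ a # v' @ b # s'" using w1 w2 by simp
  consider "length p' < length p" | "length p < length p'" | "length p = length p'"
    by linarith
  then show ?thesis
  proof cases
    case 1
    from two_occurrences[OF eq[symmetric] 1] obtain m
      where p: "p = p' @ a # m" and r: "v' @ b # s' = m @ a # x # v @ b # s" .
    from r have "(v' @ [b]) @ s' = (m @ [a]) @ x # v @ b # s" by simp
    then obtain t where t: "m @ [a] = (v' @ [b]) @ t"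
      by (rule prefix_before_letter) (use \<open>b \<noteq> x\<close> \<open>x \<notin> set v'\<close> in auto)
    show ?thesis
    proof (cases t rule: rev_cases)
      case Nil
      with t shared_before w1 p show ?thesis by simp
    next
      case (snoc t0 c)
      with t disjoint_before w1 p show ?thesis by simp
    qed
  next
    case 2
    from two_occurrences[OF eq 2] obtain m
      where p': "p' = p @ a # m" and r: "x # v @ b # s = m @ a # v' @ b # s'" .
    from r have "(x # v) @ b # s = m @ a # v' @ b # s'" by simp
    then obtain t where t: "m = (x # v) @ t"
      by (rule prefix_before_letter) (use \<open>a \<noteq> x\<close> \<open>a \<notin> set v\<close> in auto)
    with r have rest: "b # s = t @ a # v' @ b # s'" by simp
    show ?thesis
    proof (cases t)
      case Nil
      with rest t shared_after w2 p' show ?thesis by simp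
    next
      case (Cons c t0)
      with rest t disjoint_after w2 p' show ?thesis by simp
    qed
  next
    case 3
    with eq have "x # v @ b # s = v' @ b # s'" by simp
    with \<open>b \<noteq> x\<close> \<open>x \<notin> set v'\<close> have False by (cases v') auto
    then show ?thesis ..
  qed
qed

lemma two_factors_ambiguous:
  assumes "w = p @ a # x # v @ b # s" and "w = p' @ a # v' @ b # s'"
    and "a \<noteq> x" "b \<noteq> x" "a \<notin> set v" "x \<notin> set v'"
  shows "bigram_ambiguous w"
proof -
  have starts: "hd (v' @ [b]) \<noteq> hd ((x # v) @ [b])"
    using \<open>b \<noteq> x\<close> \<open>x \<notin> set v'\<close> by (cases v') auto
  from assms show ?thesis
  proof (cases rule: factor_positions)
    case disjoint_before
    then show ?thesis using ambiguous_swap_segments[OF starts] by simp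
  next
    case shared_before
    then show ?thesis using ambiguous_swap_returns[of v' a "x # v"] starts by simp
  next
    case disjoint_after
    then show ?thesis using ambiguous_swap_segments[OF starts[symmetric]] by simp
  next
    case shared_after
    then show ?thesis using ambiguous_swap_returns[of "x # v" a v'] starts by simp
  qed
qed

theorem lemma1:
  fixes Sig :: "'a set" and x a b :: 'a
  assumes "finite Sig"
    and "x \<in> Sig" and "a \<in> Sig - {x}" and "b \<in> Sig - {x}"
  shows "K_lang Sig x a b \<subseteq> {w. set w \<subseteq> Sig} - L_UNIQ Sig"
proof
  fix w assume "w \<in> K_lang Sig x a b"
  then obtain p v s p' v' s' where w1: "w = p @ [a, x] @ v @ [b] @ s"
      and Sig: "set p \<subseteq> Sig" "set v \<subseteq> Sig - {a}" "set s \<subseteq> Sig"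
      and w2: "w = p' @ [a] @ v' @ [b] @ s'" and v': "set v' \<subseteq> Sig - {x}"
    unfolding K_lang_def I_lang_def J_lang_def by blast
  have "set w \<subseteq> Sig" using w1 Sig assms by auto
  moreover have "bigram_ambiguous w"
    using two_factors_ambiguous[of w p a x v b s p' v' s'] w1 w2 assms Sig v' by auto
  ultimately show "w \<in> {w. set w \<subseteq> Sig} - L_UNIQ Sig"
    by (simp add: bigram_ambiguous_not_UNIQ)
qed

end
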